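(* Let $\mathcal{S}_2=\{\nu_{Q_AQ_B},\{\{P^x_a\}_a\}_x,\{\{Q^y_b\}_b\}_y\}$ be a quantum strategy for the two-player game $\mathcal{G}_2$ whose winning probability is at least $\omega_{\mathrm{exp}}$, and let $\mathcal{S}_3=\{\nu_{Q_AQ_BE},\{\{F^{xy}_c\}_{c\in\{0,1\}}\}_{x,y},\{\{P^x_a\}_a\}_x,\{\{Q^y_b\}_b\}_y\}$ be any extension of it (i.e. $\mathrm{Tr}_E\nu_{Q_AQ_BE}=\nu_{Q_AQ_B}$, Alice's and Bob's measurements unchanged, Eve measures POVM $\{F^{xy}_c\}_c$ on $E$ after learning $x,y$). Let $G_E$ be the event that Eve's output $c$ equals Alice's bit $S_A=SK_A(a,x,y)$. Then $$\Pr[G_E]_{\mathcal{S}_3}\le 1-\omega_{\mathrm{exp}}+\omega_3,$$ and consequently, for any $\beta\in[\omega_3,\omega_2]$ with $1-\beta+\omega_3>0$, $$-\log_2\Pr[G_E]_{\mathcal{S}_3}\ \ge\ \frac{\omega_{\mathrm{exp}}-\beta}{\ln 2\,(1-\beta+\omega_3)}-\log_2(1-\beta+\omega_3).$$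
   Context: A two-player non-local game $\mathcal{G}_2$ has finite question sets $\mathcal{X},\mathcal{Y}$, answer sets $\mathcal{A},\mathcal{B}$, a product question distribution $\pi$, and predicate $V(x,y,a,b)=[SK_A(a,x,y)=SK_B(b,x,y)]$ for deterministic bit-valued functions $SK_A,SK_B$. Its three-player extension $\mathcal{G}_3$: a third player receives both $(x,y)$ and outputs $c\in\{0,1\}$; the players win iff $SK_A(a,x,y)=SK_B(b,x,y)=c$. $\omega_2,\omega_3$ denote the quantum values of $\mathcal{G}_2,\mathcal{G}_3$ (supremum of winning probability over quantum strategies with arbitrary finite-dimensional shared states and local POVMs). $\omega_{\mathrm{exp}}\in[\omega_3,\omega_2]$. *)

theory Defs
  imports "HOL-Analysis.Analysis"
begin

text \<open>Finite-dimensional complex matrices are represented as entry functions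
  nat => nat => complex together with an explicit dimension d; only the entries
  with indices below d are meaningful.\<close>

type_synonym cmat = "nat \<Rightarrow> nat \<Rightarrow> complex"

definition mtrace :: "nat \<Rightarrow> cmat \<Rightarrow> complex" where
  "mtrace d M = (\<Sum>i<d. M i i)"

definition mmult :: "nat \<Rightarrow> cmat \<Rightarrow> cmat \<Rightarrow> cmat" where
  "mmult d M N = (\<lambda>i j. \<Sum>k<d. M i k * N k j)"

definition kron :: "nat \<Rightarrow> cmat \<Rightarrow> cmat \<Rightarrow> cmat" where
  "kron dB A B = (\<lambda>i j. A (i div dB) (j div dB) * B (i mod dB) (j mod dB))"

definition ptrace_last :: "nat \<Rightarrow> cmat \<Rightarrow> cmat" where
  "ptrace_last dE M = (\<lambda>i j. \<Sum>k<dE. M (i * dE + k) (j * dE + k))"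

definition psd :: "nat \<Rightarrow> cmat \<Rightarrow> bool" where
  "psd d M \<longleftrightarrow> (\<forall>v :: nat \<Rightarrow> complex.
      Im (\<Sum>i<d. \<Sum>j<d. cnj (v i) * M i j * v j) = 0 \<and>
      Re (\<Sum>i<d. \<Sum>j<d. cnj (v i) * M i j * v j) \<ge> 0)"

definition density :: "nat \<Rightarrow> cmat \<Rightarrow> bool" where
  "density d \<rho> \<longleftrightarrow> psd d \<rho> \<and> mtrace d \<rho> = 1"

definition povm :: "nat \<Rightarrow> ('o::finite \<Rightarrow> cmat) \<Rightarrow> bool" where
  "povm d M \<longleftrightarrow> (\<forall>r. psd d (M r)) \<and>
     (\<forall>i<d. \<forall>j<d. (\<Sum>r\<in>UNIV. M r i j) = (if i = j then 1 else 0))"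

definition prob_dist :: "('q::finite \<Rightarrow> real) \<Rightarrow> bool" where
  "prob_dist p \<longleftrightarrow> (\<forall>q. 0 \<le> p q) \<and> (\<Sum>q\<in>UNIV. p q) = 1"

definition strat2 :: "nat \<Rightarrow> nat \<Rightarrow> cmat \<Rightarrow> ('x \<Rightarrow> 'a::finite \<Rightarrow> cmat)
     \<Rightarrow> ('y \<Rightarrow> 'b::finite \<Rightarrow> cmat) \<Rightarrow> bool" where
  "strat2 dA dB \<rho> P Q \<longleftrightarrow> 0 < dA \<and> 0 < dB \<and> density (dA * dB) \<rho> \<and>
     (\<forall>x. povm dA (P x)) \<and> (\<forall>y. povm dB (Q y))"

definition strat3 :: "nat \<Rightarrow> nat \<Rightarrow> nat \<Rightarrow> cmat \<Rightarrow> ('x \<Rightarrow> 'a::finite \<Rightarrow> cmat)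
     \<Rightarrow> ('y \<Rightarrow> 'b::finite \<Rightarrow> cmat) \<Rightarrow> ('x \<Rightarrow> 'y \<Rightarrow> bool \<Rightarrow> cmat) \<Rightarrow> bool" where
  "strat3 dA dB dE \<rho> P Q F \<longleftrightarrow> 0 < dA \<and> 0 < dB \<and> 0 < dE \<and>
     density (dA * dB * dE) \<rho> \<and>
     (\<forall>x. povm dA (P x)) \<and> (\<forall>y. povm dB (Q y)) \<and> (\<forall>x y. povm dE (F x y))"

definition prob2 :: "nat \<Rightarrow> nat \<Rightarrow> cmat \<Rightarrow> ('x \<Rightarrow> 'a \<Rightarrow> cmat) \<Rightarrow> ('y \<Rightarrow> 'b \<Rightarrow> cmat)
     \<Rightarrow> 'x \<Rightarrow> 'y \<Rightarrow> 'a \<Rightarrow> 'b \<Rightarrow> real" where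
  "prob2 dA dB \<rho> P Q x y a b =
     Re (mtrace (dA * dB) (mmult (dA * dB) \<rho> (kron dB (P x a) (Q y b))))"

definition prob3 :: "nat \<Rightarrow> nat \<Rightarrow> nat \<Rightarrow> cmat \<Rightarrow> ('x \<Rightarrow> 'a \<Rightarrow> cmat) \<Rightarrow> ('y \<Rightarrow> 'b \<Rightarrow> cmat)
     \<Rightarrow> ('x \<Rightarrow> 'y \<Rightarrow> bool \<Rightarrow> cmat) \<Rightarrow> 'x \<Rightarrow> 'y \<Rightarrow> 'a \<Rightarrow> 'b \<Rightarrow> bool \<Rightarrow> real" where
  "prob3 dA dB dE \<rho> P Q F x y a b c =
     Re (mtrace (dA * dB * dE) (mmult (dA * dB * dE) \<rho>
           (kron dE (kron dB (P x a) (Q y b)) (F x y c))))"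

definition win2 :: "('x::finite \<Rightarrow> real) \<Rightarrow> ('y::finite \<Rightarrow> real)
     \<Rightarrow> ('a::finite \<Rightarrow> 'x \<Rightarrow> 'y \<Rightarrow> bool) \<Rightarrow> ('b::finite \<Rightarrow> 'x \<Rightarrow> 'y \<Rightarrow> bool)
     \<Rightarrow> nat \<Rightarrow> nat \<Rightarrow> cmat \<Rightarrow> ('x \<Rightarrow> 'a \<Rightarrow> cmat) \<Rightarrow> ('y \<Rightarrow> 'b \<Rightarrow> cmat) \<Rightarrow> real" where
  "win2 piA piB SKA SKB dA dB \<rho> P Q =
     (\<Sum>x\<in>UNIV. \<Sum>y\<in>UNIV. piA x * piB y *
        (\<Sum>a\<in>UNIV. \<Sum>b\<in>UNIV.
           (if SKA a x y = SKB b x y then prob2 dA dB \<rho> P Q x y a b else 0)))"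

definition win3 :: "('x::finite \<Rightarrow> real) \<Rightarrow> ('y::finite \<Rightarrow> real)
     \<Rightarrow> ('a::finite \<Rightarrow> 'x \<Rightarrow> 'y \<Rightarrow> bool) \<Rightarrow> ('b::finite \<Rightarrow> 'x \<Rightarrow> 'y \<Rightarrow> bool)
     \<Rightarrow> nat \<Rightarrow> nat \<Rightarrow> nat \<Rightarrow> cmat \<Rightarrow> ('x \<Rightarrow> 'a \<Rightarrow> cmat) \<Rightarrow> ('y \<Rightarrow> 'b \<Rightarrow> cmat)
     \<Rightarrow> ('x \<Rightarrow> 'y \<Rightarrow> bool \<Rightarrow> cmat) \<Rightarrow> real" where
  "win3 piA piB SKA SKB dA dB dE \<rho> P Q F =
     (\<Sum>x\<in>UNIV. \<Sum>y\<in>UNIV. piA x * piB y *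
        (\<Sum>a\<in>UNIV. \<Sum>b\<in>UNIV. \<Sum>c\<in>UNIV.
           (if SKA a x y = c \<and> SKB b x y = c
            then prob3 dA dB dE \<rho> P Q F x y a b c else 0)))"

definition prob_GE :: "('x::finite \<Rightarrow> real) \<Rightarrow> ('y::finite \<Rightarrow> real)
     \<Rightarrow> ('a::finite \<Rightarrow> 'x \<Rightarrow> 'y \<Rightarrow> bool) \<Rightarrow> ('b::finite)itself
     \<Rightarrow> nat \<Rightarrow> nat \<Rightarrow> nat \<Rightarrow> cmat \<Rightarrow> ('x \<Rightarrow> 'a \<Rightarrow> cmat) \<Rightarrow> ('y \<Rightarrow> 'b \<Rightarrow> cmat)
     \<Rightarrow> ('x \<Rightarrow> 'y \<Rightarrow> bool \<Rightarrow> cmat) \<Rightarrow> real" where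
  "prob_GE piA piB SKA _ dA dB dE \<rho> P Q F =
     (\<Sum>x\<in>UNIV. \<Sum>y\<in>UNIV. piA x * piB y *
        (\<Sum>a\<in>UNIV. \<Sum>b\<in>UNIV. \<Sum>c\<in>UNIV.
           (if c = SKA a x y then prob3 dA dB dE \<rho> P Q F x y a b c else 0)))"

definition omega2 :: "('x::finite \<Rightarrow> real) \<Rightarrow> ('y::finite \<Rightarrow> real)
     \<Rightarrow> ('a::finite \<Rightarrow> 'x \<Rightarrow> 'y \<Rightarrow> bool) \<Rightarrow> ('b::finite \<Rightarrow> 'x \<Rightarrow> 'y \<Rightarrow> bool) \<Rightarrow> real" where
  "omega2 piA piB SKA SKB =
     Sup {win2 piA piB SKA SKB dA dB \<rho> P Q | dA dB \<rho> P Q. strat2 dA dB \<rho> P Q}"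

definition omega3 :: "('x::finite \<Rightarrow> real) \<Rightarrow> ('y::finite \<Rightarrow> real)
     \<Rightarrow> ('a::finite \<Rightarrow> 'x \<Rightarrow> 'y \<Rightarrow> bool) \<Rightarrow> ('b::finite \<Rightarrow> 'x \<Rightarrow> 'y \<Rightarrow> bool) \<Rightarrow> real" where
  "omega3 piA piB SKA SKB =
     Sup {win3 piA piB SKA SKB dA dB dE \<rho> P Q F | dA dB dE \<rho> P Q F.
            strat3 dA dB dE \<rho> P Q F}"

end

theory Submission
  imports Defs
begin

text \<open>For fixed questions, Alice's and Bob's answers and Eve's bit form one probability
  distribution on (a, b, c), and by inclusion--exclusion
  Pr[c = S_A] \<le> 1 - Pr[S_A = S_B] + Pr[S_A = S_B = c].
  Eve's extension leaves the (a, b)-marginal unchanged, so Pr[S_A = S_B] is the two-player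
  winning probability; averaging over the questions bounds Pr[G_E] by
  1 - win_2 + win_3 \<le> 1 - \<omega>_exp + \<omega>_3. The entropy bound follows from concavity of the
  logarithm, ln (q + d) \<le> ln q + d / q.
  That the outcome probabilities are nonnegative rests on writing each positive semidefinite
  matrix as a Gram sum \<Sum>_l u_l u_l^*, obtained by peeling off Schur complements.\<close>

section \<open>Positive semidefinite matrices are Gram sums\<close>

definition quad_form :: "nat \<Rightarrow> cmat \<Rightarrow> (nat \<Rightarrow> complex) \<Rightarrow> complex" where
  "quad_form d M v = (\<Sum>i<d. \<Sum>j<d. cnj (v i) * M i j * v j)"

lemma psd_iff_quad_form:
  "psd d M \<longleftrightarrow> (\<forall>v. Im (quad_form d M v) = 0 \<and> 0 \<le> Re (quad_form d M v))"
  unfolding psd_def quad_form_def ..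

lemma psd_quad_form: "psd d M \<Longrightarrow> Im (quad_form d M v) = 0 \<and> 0 \<le> Re (quad_form d M v)"
  unfolding psd_iff_quad_form by blast

lemma quad_form_zero: "quad_form d M (\<lambda>_. 0) = 0"
  unfolding quad_form_def by simp

lemma quad_form_add_basis:
  assumes "k < d"
  shows "quad_form d M (\<lambda>i. v i + (if i = k then b else 0)) =
    quad_form d M v + cnj b * (\<Sum>j<d. M k j * v j) + (\<Sum>i<d. cnj (v i) * M i k) * b
      + cnj b * M k k * b"
proof -
  have expand: "cnj (v i + (if i = k then b else 0)) * M i j * (v j + (if j = k then b else 0))
      = cnj (v i) * M i j * v j + (if j = k then cnj (v i) * M i k * b else 0)
        + (if i = k then cnj b * M k j * v j + (if j = k then cnj b * M k k * b else 0) else 0)"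
    for i j
    by (auto simp: algebra_simps)
  have pull: "(\<Sum>j\<in>A. if P then f j else 0) = (if P then sum f A else 0)"
    for P A and f :: "nat \<Rightarrow> complex"
    by simp
  show ?thesis
    using assms unfolding quad_form_def expand
    by (simp add: sum.distrib pull sum_distrib_left sum_distrib_right mult.assoc)
qed

lemma quad_form_basis: "i < d \<Longrightarrow> quad_form d M (\<lambda>l. if l = i then 1 else 0) = M i i"
  using quad_form_add_basis[of i d M "\<lambda>_. 0" 1] by (simp add: quad_form_zero)

lemma quad_form_two_basis:
  assumes "i < d" "j < d" "i \<noteq> j"
  shows "quad_form d M (\<lambda>l. (if l = i then 1 else 0) + (if l = j then b else 0)) =
    M i i + cnj b * M j i + M i j * b + cnj b * M j j * b"
proof -
  have "(\<Sum>l<d. M j l * (if l = i then 1 else 0)) = M j i"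
    using assms(1) by (simp add: if_distrib[of "(*) _"] cong: if_cong)
  moreover have "(\<Sum>l<d. cnj (if l = i then 1 else 0) * M l j) = M i j"
    using assms(1) by (simp add: if_distrib[of cnj] if_distrib[of "\<lambda>x. x * _"] cong: if_cong)
  ultimately show ?thesis
    using quad_form_add_basis[of j d M "\<lambda>l. if l = i then 1 else 0" b] assms
    by (simp only: quad_form_basis)
qed

lemma psd_diag:
  assumes "psd d M" "i < d"
  shows "M i i = complex_of_real (Re (M i i))" "0 \<le> Re (M i i)"
  using psd_quad_form[OF assms(1), of "\<lambda>l. if l = i then 1 else 0"] quad_form_basis[OF assms(2)]
  by (auto simp: complex_eq_iff)

lemma psd_hermitian:
  assumes "psd d M" "i < d" "j < d"
  shows "M j i = cnj (M i j)"
proof (cases "i = j")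
  case True
  then show ?thesis using psd_diag(1)[OF assms(1,2)] by (metis complex_cnj_complex_of_real)
next
  case False
  \<comment> \<open>Realness of the quadratic form at e_i + e_j and e_i + \<i> e_j.\<close>
  have "Im (M i i + M j i + M i j + M j j) = 0"
    using psd_quad_form[OF assms(1), of "\<lambda>l. (if l = i then 1 else 0) + (if l = j then 1 else 0)"]
      quad_form_two_basis[OF assms(2,3) False, of M 1] by simp
  moreover have "Im (M i i - \<i> * M j i + M i j * \<i> + M j j) = 0"
    using psd_quad_form[OF assms(1), of "\<lambda>l. (if l = i then 1 else 0) + (if l = j then \<i> else 0)"]
      quad_form_two_basis[OF assms(2,3) False, of M \<i>] by simp
  ultimately show ?thesis
    using psd_diag(1)[OF assms(1,2)] psd_diag(1)[OF assms(1,3)] by (simp add: complex_eq_iff)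
qed

lemma psd_row_zero_if_diag_zero:
  assumes "psd d M" "k < d" "M k k = 0" "j < d"
  shows "M k j = 0"
proof (rule ccontr)
  assume nz: "M k j \<noteq> 0"
  then have "j \<noteq> k" using assms(3) by auto
  define z where "z = M k j"
  define n where "n = (cmod z)\<^sup>2"
  have "0 < n" using nz unfolding n_def z_def by simp
  \<comment> \<open>Testing M against e_j + b e_k with b a large negative multiple of z.\<close>
  define t where "t = (Re (M j j) + 1) / (2 * n)"
  define b where "b = - complex_of_real t * z"
  have "M j k = cnj z" using psd_hermitian[OF assms(1,4,2)] z_def by simp
  moreover have "cnj z * z = complex_of_real n"
    unfolding n_def using complex_norm_square[of z] by (simp add: mult.commute)
  ultimately have "quad_form d M (\<lambda>l. (if l = j then 1 else 0) + (if l = k then b else 0))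
      = M j j - complex_of_real (2 * t * n)"
    using quad_form_two_basis[OF assms(4,2) \<open>j \<noteq> k\<close>, of M b] assms(3) z_def
    unfolding b_def by (simp add: algebra_simps)
  then have "0 \<le> Re (M j j) - 2 * t * n"
    using psd_quad_form[OF assms(1), of "\<lambda>l. (if l = j then 1 else 0) + (if l = k then b else 0)"]
    by simp
  moreover have "2 * t * n = Re (M j j) + 1" unfolding t_def using \<open>0 < n\<close> by simp
  ultimately show False by simp
qed

lemma psd_schur_complement:
  assumes "psd d M" "k < d" "M k k \<noteq> 0"
  shows "psd d (\<lambda>i j. M i j - M i k * M k j / M k k)"
  unfolding psd_iff_quad_form
proof
  fix v
  define s where "s = (\<Sum>j<d. M k j * v j)"
  define r where "r = Re (M k k)"
  have Mkk: "M k k = complex_of_real r" using psd_diag(1)[OF assms(1,2)] r_def by simp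
  have "r \<noteq> 0" using Mkk assms(3) by auto
  have cnj_s: "(\<Sum>i<d. cnj (v i) * M i k) = cnj s"
    unfolding s_def by (simp add: psd_hermitian[OF assms(1) _ assms(2)] mult.commute)
  have "quad_form d (\<lambda>i j. M i j - M i k * M k j / M k k) v
      = quad_form d M v - (\<Sum>i<d. cnj (v i) * M i k) * s / M k k"
    unfolding quad_form_def s_def
    by (simp add: algebra_simps sum_subtractf sum_distrib_left sum_distrib_right sum_divide_distrib)
  also have "\<dots> = quad_form d M v - cnj s * s / complex_of_real r"
    using cnj_s Mkk by simp
  also have "\<dots> = quad_form d M (\<lambda>i. v i + (if i = k then - (s / M k k) else 0))"
  proof -
    have "cnj (- (s / complex_of_real r)) * s + cnj s * (- (s / complex_of_real r))
        + cnj (- (s / complex_of_real r)) * complex_of_real r * (- (s / complex_of_real r))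
      = - (cnj s * s / complex_of_real r)"
      using \<open>r \<noteq> 0\<close> by (simp add: field_simps)
    then show ?thesis
      using quad_form_add_basis[OF assms(2), of M v "- (s / M k k)"] cnj_s
      unfolding s_def[symmetric] Mkk by simp
  qed
  finally show "Im (quad_form d (\<lambda>i j. M i j - M i k * M k j / M k k) v) = 0 \<and>
      0 \<le> Re (quad_form d (\<lambda>i j. M i j - M i k * M k j / M k k) v)"
    using psd_quad_form[OF assms(1)] by simp
qed

lemma psd_gram_trailing:
  "n \<le> d \<Longrightarrow> psd d M \<Longrightarrow> (\<forall>i<d. \<forall>j<d. (i < d - n \<or> j < d - n) \<longrightarrow> M i j = 0) \<Longrightarrow>
   \<exists>u. \<forall>i<d. \<forall>j<d. M i j = (\<Sum>l<n. u l i * cnj (u l j))"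
proof (induction n arbitrary: M)
  case 0
  then show ?case by auto
next
  case (Suc n)
  define k where "k = d - Suc n"
  have k: "k < d" "d - n = Suc k" using Suc.prems(1) unfolding k_def by auto
  show ?case
  proof (cases "M k k = 0")
    case True
    have "M k j = 0" "M j k = 0" if "j < d" for j
      using psd_row_zero_if_diag_zero[OF Suc.prems(2) k(1) True that]
        psd_hermitian[OF Suc.prems(2) k(1) that] by simp_all
    then have "\<forall>i<d. \<forall>j<d. (i < d - n \<or> j < d - n) \<longrightarrow> M i j = 0"
      using Suc.prems(3) k k_def by (metis less_Suc_eq)
    then obtain u where u: "\<forall>i<d. \<forall>j<d. M i j = (\<Sum>l<n. u l i * cnj (u l j))"
      using Suc.IH[OF _ Suc.prems(2)] Suc.prems(1) by auto
    show ?thesis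
      by (rule exI[of _ "u(n := (\<lambda>_. 0))"]) (simp add: u)
  next
    case False
    define M' where "M' = (\<lambda>i j. M i j - M i k * M k j / M k k)"
    have "psd d M'" unfolding M'_def using psd_schur_complement[OF Suc.prems(2) k(1) False] .
    moreover have "\<forall>i<d. \<forall>j<d. (i < d - n \<or> j < d - n) \<longrightarrow> M' i j = 0"
      using Suc.prems(3) k k_def False unfolding M'_def by (auto simp: less_Suc_eq)
    ultimately obtain u where u: "\<forall>i<d. \<forall>j<d. M' i j = (\<Sum>l<n. u l i * cnj (u l j))"
      using Suc.IH Suc.prems(1) by fastforce
    define r where "r = Re (M k k)"
    have Mkk: "M k k = complex_of_real r" using psd_diag(1)[OF Suc.prems(2) k(1)] r_def by simp
    have "0 < r" using Mkk False psd_diag(2)[OF Suc.prems(2) k(1)] r_def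
      by (metis less_eq_real_def of_real_0)
    define w where "w = (\<lambda>i. M i k / complex_of_real (sqrt r))"
    have "w i * cnj (w j) = M i k * M k j / M k k" if "j < d" for i j
      unfolding w_def using psd_hermitian[OF Suc.prems(2) k(1) that] Mkk \<open>0 < r\<close>
      by (simp add: field_simps power2_eq_square[symmetric] flip: of_real_mult of_real_power)
    then show ?thesis
      using u unfolding M'_def by (intro exI[of _ "u(n := w)"]) (simp add: algebra_simps)
  qed
qed

lemma psd_gram: "psd d M \<Longrightarrow> \<exists>u. \<forall>i<d. \<forall>j<d. M i j = (\<Sum>l<d. u l i * cnj (u l j))"
  using psd_gram_trailing[of d d M] by simp

section \<open>Outcome probabilities of a three-player strategy\<close>

lemma sum_lessThan_mult:
  fixes f :: "nat \<Rightarrow> 'a::comm_monoid_add"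
  shows "(\<Sum>i<m * n. f i) = (\<Sum>I<m. \<Sum>e<n. f (I * n + e))"
proof -
  have "(\<Sum>e<n. f (I * n + e)) = (\<Sum>i\<in>{I * n..<I * n + n}. f i)" for I
    using sum.shift_bounds_nat_ivl[of f 0 "I * n" n] by (simp add: atLeast0LessThan add.commute)
  then show ?thesis using sum.nat_group[of f n m] by simp
qed

lemma mtrace_mmult: "mtrace d (mmult d \<rho> K) = (\<Sum>i<d. \<Sum>k<d. \<rho> i k * K k i)"
  unfolding mtrace_def mmult_def by simp

lemma mtrace_mmult_gram_nonneg:
  assumes "psd d \<rho>" "finite T" "\<forall>i<d. \<forall>j<d. K j i = (\<Sum>t\<in>T. w t j * cnj (w t i))"
  shows "0 \<le> Re (mtrace d (mmult d \<rho> K))"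
proof -
  have "mtrace d (mmult d \<rho> K) = (\<Sum>i<d. \<Sum>k<d. \<Sum>t\<in>T. \<rho> i k * (w t k * cnj (w t i)))"
    unfolding mtrace_mmult using assms(3) by (simp add: sum_distrib_left)
  also have "\<dots> = (\<Sum>t\<in>T. quad_form d \<rho> (w t))"
    unfolding quad_form_def
    by (subst sum.swap, rule sum.cong, simp, subst sum.swap, (rule sum.cong, simp)+, simp add: mult_ac)
  finally show ?thesis using psd_quad_form[OF assms(1)] by (simp add: sum_nonneg)
qed

lemma kron3_index_bounds:
  fixes i dA dB dE :: nat
  assumes "i < dA * dB * dE" "0 < dB" "0 < dE"
  shows "i div dE div dB < dA" "i div dE mod dB < dB" "i mod dE < dE" "i div dE < dA * dB"
proof -
  show "i div dE < dA * dB" using assms(1,3) by (simp add: div_less_iff_less_mult)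
  then show "i div dE div dB < dA" using assms(2) by (simp add: div_less_iff_less_mult)
qed (use assms in simp_all)

lemma kron3_index_eq:
  fixes i k dB dE :: nat
  assumes "k div dE div dB = i div dE div dB" "k div dE mod dB = i div dE mod dB"
    "k mod dE = i mod dE"
  shows "k = i"
  using assms by (metis div_mult_mod_eq)

lemma prob3_nonneg:
  assumes "strat3 dA dB dE \<rho> P Q F"
  shows "0 \<le> prob3 dA dB dE \<rho> P Q F x y a b c"
proof -
  have ps: "psd (dA * dB * dE) \<rho>" "psd dA (P x a)" "psd dB (Q y b)" "psd dE (F x y c)"
    "0 < dB" "0 < dE"
    using assms unfolding strat3_def density_def povm_def by auto
  obtain u1 where u1: "\<forall>i<dA. \<forall>j<dA. P x a i j = (\<Sum>l<dA. u1 l i * cnj (u1 l j))"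
    using psd_gram[OF ps(2)] by blast
  obtain u2 where u2: "\<forall>i<dB. \<forall>j<dB. Q y b i j = (\<Sum>l<dB. u2 l i * cnj (u2 l j))"
    using psd_gram[OF ps(3)] by blast
  obtain u3 where u3: "\<forall>i<dE. \<forall>j<dE. F x y c i j = (\<Sum>l<dE. u3 l i * cnj (u3 l j))"
    using psd_gram[OF ps(4)] by blast
  define T where "T = {..<dA} \<times> {..<dB} \<times> {..<dE}"
  define w where "w = (\<lambda>(k, l, m) i.
    u1 k (i div dE div dB) * u2 l (i div dE mod dB) * u3 m (i mod dE))"
  have "kron dE (kron dB (P x a) (Q y b)) (F x y c) j i = (\<Sum>t\<in>T. w t j * cnj (w t i))"
    if "i < dA * dB * dE" "j < dA * dB * dE" for i j
  proof -
    have "kron dE (kron dB (P x a) (Q y b)) (F x y c) j i =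
       (\<Sum>k<dA. u1 k (j div dE div dB) * cnj (u1 k (i div dE div dB))) *
       (\<Sum>l<dB. u2 l (j div dE mod dB) * cnj (u2 l (i div dE mod dB))) *
       (\<Sum>m<dE. u3 m (j mod dE) * cnj (u3 m (i mod dE)))"
      unfolding kron_def using u1 u2 u3 kron3_index_bounds[OF that(1) ps(5,6)]
        kron3_index_bounds[OF that(2) ps(5,6)] by simp
    also have "\<dots> = (\<Sum>k<dA. \<Sum>l<dB. \<Sum>m<dE. w (k, l, m) j * cnj (w (k, l, m) i))"
      unfolding w_def by (simp add: sum_distrib_left sum_distrib_right mult_ac) (rule sum.swap)
    finally show ?thesis unfolding T_def by (simp add: sum.cartesian_product)
  qed
  then show ?thesis unfolding prob3_def
    by (intro mtrace_mmult_gram_nonneg[OF ps(1), where T = T and w = w]) (auto simp: T_def)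
qed

lemma sum_swap_into_trace:
  "(\<Sum>a\<in>A. \<Sum>i<d. \<Sum>k<d. f a i k) = (\<Sum>i<d. \<Sum>k<d. \<Sum>a\<in>A. f a i k)"
  by (subst sum.swap, rule sum.cong, simp, rule sum.swap)

lemma prob3_sum_eq_1:
  assumes "strat3 dA dB dE \<rho> P Q F"
  shows "(\<Sum>a\<in>UNIV. \<Sum>b\<in>UNIV. \<Sum>c\<in>UNIV. prob3 dA dB dE \<rho> P Q F x y a b c) = 1"
proof -
  let ?D = "dA * dB * dE"
  let ?K = "\<lambda>a b c. kron dE (kron dB (P x a) (Q y b)) (F x y c)"
  have ps: "mtrace ?D \<rho> = 1" "povm dA (P x)" "povm dB (Q y)" "povm dE (F x y)" "0 < dB" "0 < dE"
    using assms unfolding strat3_def density_def by auto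
  have K: "(\<Sum>a\<in>UNIV. \<Sum>b\<in>UNIV. \<Sum>c\<in>UNIV. ?K a b c k i) = (if k = i then 1 else 0)"
    if "i < ?D" "k < ?D" for i k
  proof -
    have "(\<Sum>a\<in>UNIV. \<Sum>b\<in>UNIV. \<Sum>c\<in>UNIV. ?K a b c k i) =
      (\<Sum>a\<in>UNIV. P x a (k div dE div dB) (i div dE div dB)) *
      ((\<Sum>b\<in>UNIV. Q y b (k div dE mod dB) (i div dE mod dB)) *
       (\<Sum>c\<in>UNIV. F x y c (k mod dE) (i mod dE)))"
      unfolding kron_def mult.assoc by (simp only: sum_product, simp only: sum_distrib_left)
    also have "\<dots> = (if k div dE div dB = i div dE div dB then 1 else 0) *
        ((if k div dE mod dB = i div dE mod dB then 1 else 0) *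
         (if k mod dE = i mod dE then 1 else 0))"
      using ps(2,3,4) kron3_index_bounds[OF that(1) ps(5,6)] kron3_index_bounds[OF that(2) ps(5,6)]
      unfolding povm_def by simp
    also have "\<dots> = (if k = i then 1 else 0)" using kron3_index_eq[of k dE dB i] by auto
    finally show ?thesis .
  qed
  have "(\<Sum>a\<in>UNIV. \<Sum>b\<in>UNIV. \<Sum>c\<in>UNIV. mtrace ?D (mmult ?D \<rho> (?K a b c)))
     = (\<Sum>i<?D. \<Sum>k<?D. \<rho> i k * (\<Sum>a\<in>UNIV. \<Sum>b\<in>UNIV. \<Sum>c\<in>UNIV. ?K a b c k i))"
    unfolding mtrace_mmult sum_distrib_left by (simp only: sum_swap_into_trace)
  also have "\<dots> = (\<Sum>i<?D. \<Sum>k<?D. \<rho> i k * (if k = i then 1 else 0))"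
    by (intro sum.cong refl) (simp add: K)
  also have "\<dots> = mtrace ?D \<rho>"
    unfolding mtrace_def by (simp add: if_distrib[of "(*) _"] cong: if_cong)
  finally show ?thesis unfolding prob3_def using ps(1) by (simp flip: Re_sum)
qed

lemma prob3_marginal:
  assumes "strat3 dA dB dE \<rho>3 P Q F"
    and "\<forall>i < dA * dB. \<forall>j < dA * dB. ptrace_last dE \<rho>3 i j = \<rho>2 i j"
  shows "(\<Sum>c\<in>UNIV. prob3 dA dB dE \<rho>3 P Q F x y a b c) = prob2 dA dB \<rho>2 P Q x y a b"
proof -
  let ?N = "dA * dB"
  let ?K = "kron dB (P x a) (Q y b)"
  have "povm dE (F x y)" "0 < dE" using assms(1) unfolding strat3_def by auto
  then have F: "(\<Sum>c\<in>UNIV. F x y c e' e) = (if e' = e then 1 else 0)" if "e < dE" "e' < dE" for e e'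
    using that unfolding povm_def by auto
  have "(\<Sum>c\<in>UNIV. mtrace (?N * dE) (mmult (?N * dE) \<rho>3 (kron dE ?K (F x y c))))
     = (\<Sum>i<?N * dE. \<Sum>k<?N * dE. \<rho>3 i k *
          (?K (k div dE) (i div dE) * (\<Sum>c\<in>UNIV. F x y c (k mod dE) (i mod dE))))"
    unfolding mtrace_mmult kron_def sum_distrib_left by (simp only: sum_swap_into_trace)
  also have "\<dots> = (\<Sum>I<?N. \<Sum>e<dE. \<Sum>K<?N. \<Sum>e'<dE.
      \<rho>3 (I * dE + e) (K * dE + e') * (?K K I * (if e' = e then 1 else 0)))"
    unfolding sum_lessThan_mult using \<open>0 < dE\<close> by (intro sum.cong refl) (simp add: F)
  also have "\<dots> = (\<Sum>I<?N. \<Sum>e<dE. \<Sum>K<?N. \<rho>3 (I * dE + e) (K * dE + e) * ?K K I)"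
    by (simp add: if_distrib[of "(*) _"] cong: if_cong)
  also have "\<dots> = (\<Sum>I<?N. \<Sum>K<?N. ptrace_last dE \<rho>3 I K * ?K K I)"
    unfolding ptrace_last_def sum_distrib_right by (rule sum.cong[OF refl], rule sum.swap)
  also have "\<dots> = (\<Sum>I<?N. \<Sum>K<?N. \<rho>2 I K * ?K K I)"
    using assms(2) by (intro sum.cong refl) simp
  finally show ?thesis unfolding prob3_def prob2_def mtrace_mmult[symmetric]
    by (simp flip: Re_sum)
qed

section \<open>Bounding Eve's guessing probability\<close>

lemma prob_dist_product_sum:
  "prob_dist piA \<Longrightarrow> prob_dist piB \<Longrightarrow> (\<Sum>x\<in>UNIV. \<Sum>y\<in>UNIV. piA x * piB y) = 1"
  unfolding prob_dist_def by (simp add: sum_product[symmetric])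

lemma win3_le_1:
  assumes "prob_dist piA" "prob_dist piB" "strat3 dA dB dE \<rho> P Q F"
  shows "win3 piA piB SKA SKB dA dB dE \<rho> P Q F \<le> 1"
proof -
  have "win3 piA piB SKA SKB dA dB dE \<rho> P Q F \<le> (\<Sum>x\<in>UNIV. \<Sum>y\<in>UNIV. piA x * piB y *
        (\<Sum>a\<in>UNIV. \<Sum>b\<in>UNIV. \<Sum>c\<in>UNIV. prob3 dA dB dE \<rho> P Q F x y a b c))"
    unfolding win3_def using assms(1,2) prob3_nonneg[OF assms(3)] unfolding prob_dist_def
    by (intro sum_mono mult_left_mono) auto
  also have "\<dots> = 1" using prob3_sum_eq_1[OF assms(3)] prob_dist_product_sum[OF assms(1,2)] by simp
  finally show ?thesis .
qed

lemma win3_le_omega3: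
  assumes "prob_dist piA" "prob_dist piB" "strat3 dA dB dE \<rho> P Q F"
  shows "win3 piA piB SKA SKB dA dB dE \<rho> P Q F \<le> omega3 piA piB SKA SKB"
  unfolding omega3_def
  using assms(3) win3_le_1[OF assms(1,2)] by (intro cSup_upper bdd_aboveI[of _ 1]) blast+

lemma prob_GE_le_win_difference:
  assumes "prob_dist piA" "prob_dist piB" "strat3 dA dB dE \<rho>3 P Q F"
    and "\<forall>i < dA * dB. \<forall>j < dA * dB. ptrace_last dE \<rho>3 i j = \<rho>2 i j"
  shows "prob_GE piA piB SKA TYPE('b::finite) dA dB dE \<rho>3 P Q F
    \<le> 1 - win2 piA piB SKA SKB dA dB \<rho>2 P Q + win3 piA piB SKA SKB dA dB dE \<rho>3 P Q F"
proof -
  define w where "w = (\<lambda>x y. piA x * piB y)"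
  define p where "p = prob3 dA dB dE \<rho>3 P Q F"
  define guess where "guess = (\<lambda>x y. \<Sum>a\<in>UNIV. \<Sum>b\<in>UNIV. \<Sum>c\<in>UNIV.
    if c = SKA a x y then p x y a b c else 0)"
  define agree2 where "agree2 = (\<lambda>x y. \<Sum>a\<in>UNIV. \<Sum>b::'b\<in>UNIV.
    if SKA a x y = SKB b x y then prob2 dA dB \<rho>2 P Q x y a b else 0)"
  define agree3 where "agree3 = (\<lambda>x y. \<Sum>a\<in>UNIV. \<Sum>b\<in>UNIV. \<Sum>c\<in>UNIV.
    if SKA a x y = c \<and> SKB b x y = c then p x y a b c else 0)"
  have inclusion_exclusion: "guess x y \<le> 1 - agree2 x y + agree3 x y" for x y
  proof -
    have "agree2 x y = (\<Sum>a\<in>UNIV. \<Sum>b\<in>UNIV. \<Sum>c\<in>UNIV.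
        if SKA a x y = SKB b x y then p x y a b c else 0)"
      unfolding agree2_def p_def by (intro sum.cong refl) (auto simp: prob3_marginal[OF assms(3,4)])
    then have "guess x y + agree2 x y - agree3 x y = (\<Sum>a\<in>UNIV. \<Sum>b\<in>UNIV. \<Sum>c\<in>UNIV.
        (if c = SKA a x y then p x y a b c else 0)
        + (if SKA a x y = SKB b x y then p x y a b c else 0)
        - (if SKA a x y = c \<and> SKB b x y = c then p x y a b c else 0))"
      unfolding guess_def agree3_def by (simp add: sum.distrib sum_subtractf)
    also have "\<dots> \<le> (\<Sum>a\<in>UNIV. \<Sum>b\<in>UNIV. \<Sum>c\<in>UNIV. p x y a b c)"
      using prob3_nonneg[OF assms(3)] unfolding p_def by (intro sum_mono) auto
    also have "\<dots> = 1" unfolding p_def using prob3_sum_eq_1[OF assms(3)] .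
    finally show ?thesis by simp
  qed
  have "prob_GE piA piB SKA TYPE('b) dA dB dE \<rho>3 P Q F = (\<Sum>x\<in>UNIV. \<Sum>y\<in>UNIV. w x y * guess x y)"
    unfolding prob_GE_def w_def guess_def p_def ..
  also have "\<dots> \<le> (\<Sum>x\<in>UNIV. \<Sum>y\<in>UNIV. w x y * (1 - agree2 x y + agree3 x y))"
    using inclusion_exclusion assms(1,2) unfolding w_def prob_dist_def
    by (intro sum_mono mult_left_mono) auto
  also have "\<dots> = (\<Sum>x\<in>UNIV. \<Sum>y\<in>UNIV. w x y) - (\<Sum>x\<in>UNIV. \<Sum>y\<in>UNIV. w x y * agree2 x y)
      + (\<Sum>x\<in>UNIV. \<Sum>y\<in>UNIV. w x y * agree3 x y)"
    by (simp add: algebra_simps sum.distrib sum_subtractf)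
  also have "\<dots> = 1 - win2 piA piB SKA SKB dA dB \<rho>2 P Q + win3 piA piB SKA SKB dA dB dE \<rho>3 P Q F"
    unfolding w_def agree2_def agree3_def p_def win2_def win3_def
    using prob_dist_product_sum[OF assms(1,2)] by simp
  finally show ?thesis .
qed

lemma minus_log2_ge_linearised:
  fixes p q e :: real
  assumes "0 < p" "p \<le> q - e" "0 < q"
  shows "e / (ln 2 * q) - log 2 q \<le> - log 2 p"
proof -
  have "ln p \<le> ln (q - e)" using assms by simp
  also have "ln (q - e) = ln q + ln ((q - e) / q)" using assms by (simp add: ln_div)
  also have "ln ((q - e) / q) \<le> (q - e) / q - 1" using assms by (intro ln_le_minus_one) simp
  also have "(q - e) / q - 1 = - e / q" using assms(3) by (simp add: field_simps)
  finally have "ln p / ln 2 \<le> (ln q - e / q) / ln 2"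
    by (intro divide_right_mono) simp_all
  moreover have "(ln q - e / q) / ln 2 = ln q / ln 2 - e / (ln 2 * q)"
    by (simp add: field_simps)
  ultimately show ?thesis unfolding log_def by linarith
qed

theorem mainTheorem6:
  fixes piA :: "'x::finite \<Rightarrow> real" and piB :: "'y::finite \<Rightarrow> real"
    and SKA :: "'a::finite \<Rightarrow> 'x \<Rightarrow> 'y \<Rightarrow> bool"
    and SKB :: "'b::finite \<Rightarrow> 'x \<Rightarrow> 'y \<Rightarrow> bool"
    and dA dB dE :: nat and \<rho>2 \<rho>3 :: cmat
    and P :: "'x \<Rightarrow> 'a \<Rightarrow> cmat" and Q :: "'y \<Rightarrow> 'b \<Rightarrow> cmat"
    and F :: "'x \<Rightarrow> 'y \<Rightarrow> bool \<Rightarrow> cmat"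
    and \<omega>exp :: real
  assumes "prob_dist piA" and "prob_dist piB"
    and "omega3 piA piB SKA SKB \<le> \<omega>exp" and "\<omega>exp \<le> omega2 piA piB SKA SKB"
    and "strat2 dA dB \<rho>2 P Q"
    and "win2 piA piB SKA SKB dA dB \<rho>2 P Q \<ge> \<omega>exp"
    and "strat3 dA dB dE \<rho>3 P Q F"
    and "\<forall>i < dA * dB. \<forall>j < dA * dB. ptrace_last dE \<rho>3 i j = \<rho>2 i j"
  shows "(prob_GE piA piB SKA TYPE('b) dA dB dE \<rho>3 P Q F
           \<le> 1 - \<omega>exp + omega3 piA piB SKA SKB)
    \<and> (\<forall>\<beta>. omega3 piA piB SKA SKB \<le> \<beta> \<and> \<beta> \<le> omega2 piA piB SKA SKB
           \<and> 1 - \<beta> + omega3 piA piB SKA SKB > 0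
           \<and> prob_GE piA piB SKA TYPE('b) dA dB dE \<rho>3 P Q F > 0 \<longrightarrow>
           - log 2 (prob_GE piA piB SKA TYPE('b) dA dB dE \<rho>3 P Q F)
             \<ge> (\<omega>exp - \<beta>) / (ln 2 * (1 - \<beta> + omega3 piA piB SKA SKB))
               - log 2 (1 - \<beta> + omega3 piA piB SKA SKB))"
proof (intro conjI allI impI)
  show guess_bound: "prob_GE piA piB SKA TYPE('b) dA dB dE \<rho>3 P Q F
      \<le> 1 - \<omega>exp + omega3 piA piB SKA SKB"
    using prob_GE_le_win_difference[OF assms(1,2,7,8), of SKA SKB] assms(6)
      win3_le_omega3[OF assms(1,2,7), of SKA SKB] by linarith
  fix \<beta>
  assume "omega3 piA piB SKA SKB \<le> \<beta> \<and> \<beta> \<le> omega2 piA piB SKA SKB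
    \<and> 1 - \<beta> + omega3 piA piB SKA SKB > 0 \<and> prob_GE piA piB SKA TYPE('b) dA dB dE \<rho>3 P Q F > 0"
  then show "- log 2 (prob_GE piA piB SKA TYPE('b) dA dB dE \<rho>3 P Q F)
      \<ge> (\<omega>exp - \<beta>) / (ln 2 * (1 - \<beta> + omega3 piA piB SKA SKB))
        - log 2 (1 - \<beta> + omega3 piA piB SKA SKB)"
    using guess_bound by (intro minus_log2_ge_linearised) auto
qed

end
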